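(* Let $\overline{\mathbb{R}}=\mathbb{R}\cup\{-\infty\}$, and let $A\in\overline{\mathbb{R}}^{n\times m}$, $B\in\overline{\mathbb{R}}^{n\times k}$, $C\in\overline{\mathbb{R}}^{k\times m}$. Let $N=\max_{i\in[n],\,j\in[m]}\max\bigl\{A_{ij},\ \max_{1\le d\le k}\{B_{id}+C_{dj}\}\bigr\}$ and $M=\exp\{N\}$. If $\|A-B\otimes C\|_F^2\le\lambda$, then $\|\exp\{A\}-\exp\{B\}\boxtimes\exp\{C\}\|_F^2\le M^2\lambda$.
   Context: The tropical (max-plus) product of $B\in\overline{\mathbb{R}}^{n\times k}$ and $C\in\overline{\mathbb{R}}^{k\times m}$ is $(B\otimes C)_{ij}=\max_{s=1}^{k}\{B_{is}+C_{sj}\}$. The max-times (subtropical) product of nonnegative matrices $X\in[0,\infty)^{n\times k}$, $Y\in[0,\infty)^{k\times m}$ is $(X\boxtimes Y)_{ij}=\max_{s=1}^k X_{is}Y_{sj}$. $\exp\{\cdot\}$ applied to a matrix acts entrywise, with the convention $\exp(-\infty)=0$. $\|\cdot\|_F$ is the Frobenius norm and $[n]=\{1,\dots,n\}$. *)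

theory Defs
  imports "HOL-Analysis.Analysis" "HOL-Library.Extended_Real"
begin

text \<open>Matrices are functions nat => nat => _ , used on index ranges {..<n} x {..<m}.
  Entries of tropical matrices live in ereal; the hypotheses exclude +infinity,
  so they range over R union {-infinity}.\<close>

definition trop_prod :: "nat \<Rightarrow> (nat \<Rightarrow> nat \<Rightarrow> ereal) \<Rightarrow> (nat \<Rightarrow> nat \<Rightarrow> ereal) \<Rightarrow> nat \<Rightarrow> nat \<Rightarrow> ereal" where
  "trop_prod k B C i j = (SUP s\<in>{..<k}. B i s + C s j)"

text \<open>Max-times product of nonnegative real matrices (max of nonnegative values;
  inserting 0 only matters for k = 0, where it gives the empty max = 0 = exp(-infinity)).\<close>
definition maxtimes_prod :: "nat \<Rightarrow> (nat \<Rightarrow> nat \<Rightarrow> real) \<Rightarrow> (nat \<Rightarrow> nat \<Rightarrow> real) \<Rightarrow> nat \<Rightarrow> nat \<Rightarrow> real" where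
  "maxtimes_prod k X Y i j = Max (insert 0 ((\<lambda>s. X i s * Y s j) ` {..<k}))"

definition exp_ereal :: "ereal \<Rightarrow> real" where
  "exp_ereal x = (if x = -\<infinity> then 0 else exp (real_of_ereal x))"

definition ediff_sq :: "ereal \<Rightarrow> ereal \<Rightarrow> ereal" where
  "ediff_sq a b = (if a = -\<infinity> \<and> b = -\<infinity> then 0
                   else if a = -\<infinity> \<or> b = -\<infinity> then \<infinity>
                   else ereal ((real_of_ereal a - real_of_ereal b)^2))"

definition frob_sq_ereal :: "nat \<Rightarrow> nat \<Rightarrow> (nat \<Rightarrow> nat \<Rightarrow> ereal) \<Rightarrow> (nat \<Rightarrow> nat \<Rightarrow> ereal) \<Rightarrow> ereal" where
  "frob_sq_ereal n m A D = (\<Sum>i<n. \<Sum>j<m. ediff_sq (A i j) (D i j))"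

definition frob_sq :: "nat \<Rightarrow> nat \<Rightarrow> (nat \<Rightarrow> nat \<Rightarrow> real) \<Rightarrow> (nat \<Rightarrow> nat \<Rightarrow> real) \<Rightarrow> real" where
  "frob_sq n m X Y = (\<Sum>i<n. \<Sum>j<m. (X i j - Y i j)^2)"

end

theory Submission
  imports Defs
begin

text \<open>The exponential is Lipschitz with constant \<open>exp N\<close> on \<open>(-\<infinity>, N]\<close>, so
  \<open>(exp a - exp t)\<^sup>2 \<le> (exp N)\<^sup>2 (a - t)\<^sup>2\<close> for all entries \<open>a\<close> of \<open>A\<close> and \<open>t\<close> of \<open>B \<otimes> C\<close>.
  A finite error forces \<open>a = -\<infinity>\<close> exactly where \<open>t = -\<infinity>\<close>, and there both sides vanish.
  Since \<open>exp\<close> is monotone and turns sums into products, it maps \<open>B \<otimes> C\<close> to the max-times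
  product of \<open>exp B\<close> and \<open>exp C\<close>; summing the entrywise bound gives the theorem.\<close>

lemma finite_SUP_attained:
  fixes f :: "'a \<Rightarrow> ereal"
  assumes "finite S" "S \<noteq> {}"
  obtains s where "s \<in> S" "(SUP x\<in>S. f x) = f s"
proof -
  have "(SUP x\<in>S. f x) = Max (f ` S)" "Max (f ` S) \<in> f ` S"
    using assms by (simp_all add: cSup_eq_Max)
  then show ?thesis using that by auto
qed

lemma finite_SUP_neq_PInfty:
  fixes f :: "'a \<Rightarrow> ereal"
  assumes "finite S" "\<And>x. x \<in> S \<Longrightarrow> f x \<noteq> \<infinity>"
  shows "(SUP x\<in>S. f x) \<noteq> \<infinity>"
proof (cases "S = {}")
  case True
  then show ?thesis by (simp add: bot_ereal_def)
next
  case False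
  then show ?thesis using assms by (metis finite_SUP_attained)
qed

lemma nonneg_ereal_sum_le_ereal:
  fixes f :: "'a \<Rightarrow> ereal"
  assumes "finite S" "\<And>x. x \<in> S \<Longrightarrow> 0 \<le> f x" "sum f S \<le> ereal c"
  shows nonneg_ereal_sum_le_ereal_terms: "\<And>x. x \<in> S \<Longrightarrow> f x \<noteq> \<infinity>"
    and nonneg_ereal_sum_le_ereal_real: "(\<Sum>x\<in>S. real_of_ereal (f x)) \<le> c"
proof -
  show fin: "f x \<noteq> \<infinity>" if "x \<in> S" for x
    using assms(1,3) that sum_Pinfty[of f S] by auto
  have "(\<Sum>x\<in>S. real_of_ereal (f x)) = real_of_ereal (sum f S)"
    using fin assms(2) by (intro sum_real_of_ereal) fastforce
  also have "\<dots> \<le> c"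
    using assms(3) sum_nonneg[of S f] assms(2) by (cases "sum f S") auto
  finally show "(\<Sum>x\<in>S. real_of_ereal (f x)) \<le> c" .
qed

lemma exp_ereal_nonneg: "0 \<le> exp_ereal x"
  by (simp add: exp_ereal_def)

lemma exp_ereal_add:
  assumes "x \<noteq> \<infinity>" "y \<noteq> \<infinity>"
  shows "exp_ereal (x + y) = exp_ereal x * exp_ereal y"
  using assms by (cases x; cases y) (auto simp: exp_ereal_def exp_add)

lemma exp_ereal_mono:
  assumes "x \<le> y" "y \<noteq> \<infinity>"
  shows "exp_ereal x \<le> exp_ereal y"
  using assms by (cases x; cases y) (auto simp: exp_ereal_def)

lemma exp_ereal_SUP:
  fixes f :: "'a \<Rightarrow> ereal"
  assumes "finite S" "\<And>x. x \<in> S \<Longrightarrow> f x \<noteq> \<infinity>"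
  shows "exp_ereal (SUP x\<in>S. f x) = Max (insert 0 ((\<lambda>x. exp_ereal (f x)) ` S))"
proof (cases "S = {}")
  case True
  then show ?thesis by (simp add: exp_ereal_def bot_ereal_def)
next
  case False
  then obtain s where s: "s \<in> S" "(SUP x\<in>S. f x) = f s"
    using assms(1) finite_SUP_attained by metis
  have "f x \<le> f s" if "x \<in> S" for x
    using that s by (metis SUP_upper)
  then show ?thesis
    unfolding s(2) using assms s(1)
    by (intro Max_eqI[symmetric]) (auto intro: exp_ereal_mono exp_ereal_nonneg)
qed

lemma exp_ereal_trop_prod:
  assumes "\<And>d. d < k \<Longrightarrow> B i d \<noteq> \<infinity>" "\<And>d. d < k \<Longrightarrow> C d j \<noteq> \<infinity>"
  shows "exp_ereal (trop_prod k B C i j) =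
         maxtimes_prod k (\<lambda>i d. exp_ereal (B i d)) (\<lambda>d j. exp_ereal (C d j)) i j"
  unfolding trop_prod_def maxtimes_prod_def using assms
  by (subst exp_ereal_SUP) (auto simp: exp_ereal_add)

lemma abs_exp_diff_le:
  fixes x y :: real
  shows "\<bar>exp x - exp y\<bar> \<le> exp (max x y) * \<bar>x - y\<bar>"
proof -
  have "exp b - exp a \<le> exp b * (b - a)" if "a \<le> b" for a b :: real
  proof -
    have "exp b * (1 + (a - b)) \<le> exp b * exp (a - b)"
      by (simp add: exp_ge_add_one_self)
    then show ?thesis by (simp add: exp_diff algebra_simps)
  qed
  from this[of x y] this[of y x] show ?thesis
    by (cases "x \<le> y") (simp_all add: max_def abs_if)
qed

lemma exp_ereal_diff_sq_le:
  assumes "a \<le> N" "t \<le> N" "N \<noteq> \<infinity>" "ediff_sq a t \<noteq> \<infinity>"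
  shows "(exp_ereal a - exp_ereal t)\<^sup>2 \<le> (exp_ereal N)\<^sup>2 * real_of_ereal (ediff_sq a t)"
proof (cases "a = -\<infinity> \<or> t = -\<infinity>")
  case True
  then have "a = -\<infinity>" "t = -\<infinity>"
    using assms(4) by (auto simp: ediff_sq_def split: if_splits)
  then show ?thesis by (simp add: exp_ereal_def ediff_sq_def)
next
  case False
  then obtain x y z where xyz: "a = ereal x" "t = ereal y" "N = ereal z"
    using assms(1-3) by (cases a; cases t; cases N) auto
  then have "x \<le> z" "y \<le> z" using assms(1,2) by auto
  have "\<bar>exp x - exp y\<bar> \<le> exp (max x y) * \<bar>x - y\<bar>"
    by (rule abs_exp_diff_le)
  also have "\<dots> \<le> exp z * \<bar>x - y\<bar>"
    using \<open>x \<le> z\<close> \<open>y \<le> z\<close> by (intro mult_right_mono) auto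
  finally have "\<bar>exp x - exp y\<bar>\<^sup>2 \<le> (exp z * \<bar>x - y\<bar>)\<^sup>2"
    by (intro power_mono) auto
  then show ?thesis
    using xyz by (simp add: exp_ereal_def ediff_sq_def power_mult_distrib)
qed

theorem theorem4:
  fixes n m k :: nat and A B C :: "nat \<Rightarrow> nat \<Rightarrow> ereal" and lam :: real
  assumes "\<forall>i<n. \<forall>j<m. A i j \<noteq> \<infinity>"
    and "\<forall>i<n. \<forall>d<k. B i d \<noteq> \<infinity>"
    and "\<forall>d<k. \<forall>j<m. C d j \<noteq> \<infinity>"
    and "frob_sq_ereal n m A (trop_prod k B C) \<le> ereal lam"
  shows "frob_sq n m (\<lambda>i j. exp_ereal (A i j))
           (maxtimes_prod k (\<lambda>i d. exp_ereal (B i d)) (\<lambda>d j. exp_ereal (C d j)))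
         \<le> (exp_ereal (SUP ij\<in>{..<n} \<times> {..<m}.
                 max (A (fst ij) (snd ij)) (SUP d\<in>{..<k}. B (fst ij) d + C d (snd ij))))\<^sup>2 * lam"
proof -
  let ?T = "trop_prod k B C"
  let ?D = "\<lambda>(i, j). ediff_sq (A i j) (?T i j)"
  let ?I = "{..<n} \<times> {..<m}"
  define N where "N = (SUP ij\<in>?I. max (A (fst ij) (snd ij)) (?T (fst ij) (snd ij)))"
  have T_neq: "?T i j \<noteq> \<infinity>" if "i < n" "j < m" for i j
    unfolding trop_prod_def using that assms(2,3) by (intro finite_SUP_neq_PInfty) auto
  have N_neq: "N \<noteq> \<infinity>"
    unfolding N_def using T_neq assms(1) by (intro finite_SUP_neq_PInfty) (auto simp: max_def)
  have le_N: "A i j \<le> N" "?T i j \<le> N" if "i < n" "j < m" for i j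
    using that unfolding N_def by (auto intro!: SUP_upper2[where i="(i, j)"])
  have D_sum: "sum ?D ?I \<le> ereal lam"
    using assms(4) by (simp add: frob_sq_ereal_def sum.cartesian_product)
  then have D_neq: "?D ij \<noteq> \<infinity>" if "ij \<in> ?I" for ij
    using nonneg_ereal_sum_le_ereal_terms[OF _ _ D_sum] that by (auto simp: ediff_sq_def)
  have "frob_sq n m (\<lambda>i j. exp_ereal (A i j))
          (maxtimes_prod k (\<lambda>i d. exp_ereal (B i d)) (\<lambda>d j. exp_ereal (C d j)))
      = frob_sq n m (\<lambda>i j. exp_ereal (A i j)) (\<lambda>i j. exp_ereal (?T i j))"
    unfolding frob_sq_def using assms(2,3) by (simp add: exp_ereal_trop_prod)
  also have "\<dots> \<le> (\<Sum>(i, j)\<in>?I. (exp_ereal N)\<^sup>2 * real_of_ereal (?D (i, j)))"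
    unfolding frob_sq_def sum.cartesian_product using le_N N_neq D_neq
    by (intro sum_mono) (auto intro!: exp_ereal_diff_sq_le)
  also have "\<dots> = (exp_ereal N)\<^sup>2 * (\<Sum>ij\<in>?I. real_of_ereal (?D ij))"
    by (simp add: sum_distrib_left case_prod_unfold)
  also have "\<dots> \<le> (exp_ereal N)\<^sup>2 * lam"
    using nonneg_ereal_sum_le_ereal_real[OF _ _ D_sum]
    by (intro mult_left_mono) (auto simp: ediff_sq_def)
  finally show ?thesis
    unfolding N_def trop_prod_def .
qed

end
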